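(* Let $\mathcal S(a,b;r)=(S_{n,k}(a,b;r))_{n,k\ge0}$ (infinite lower-triangular matrix). (i) $\mathcal S(a,c;r_1+r_2)=\mathcal S(a,b;r_1)\,\mathcal S(b,c;r_2)$ for all complex $a,b,c,r_1,r_2$; moreover $\mathcal S(a,a;0)$ is the identity matrix, so $\mathcal S(a,b;r)^{-1}=\mathcal S(b,a;-r)$. (ii) For nonnegative integers $n,k,k_1,k_2$ with $k=k_1+k_2$, $$\frac{k!}{k_1!\,k_2!}S_{n,k}(a,b;r_1+r_2)=\sum\frac{n!}{n_1!\,n_2!}S_{n_1,k_1}(a,b;r_1)\,S_{n_2,k_2}(a,b;r_2),$$ summed over nonnegative $n_1,n_2$ with $n_1+n_2=n$, $n_1\ge k_1$, $n_2\ge k_2$. (iii) For nonnegative integers $k,n_1,n,k_2$ with $n_1=n+k_2$, $$\frac{n_1!}{n!\,k_2!}S_{n,k}(a,b;r_1+r_2)=\sum\frac{k_1!}{k!\,n_2!}S_{n_1,k_1}(a,b;r_1)\,S_{n_2,k_2}(b,a;r_2),$$ summed over nonnegative $k_1,n_2$ with $k_1=k+n_2$, $n_1\ge k_1$, $n_2\ge k_2$ (note $a,b$ interchanged in the second factor).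
   Context: Hsu–Shiue Stirling numbers $S_{n,k}(a,b;r)$: defined by $S_{0,0}=1$, $S_{n,k}=0$ if $n<0$, $k<0$ or $k>n$, and $S_{n+1,k+1}=[-an+b(k+1)+r]S_{n,k+1}+S_{n,k}$ for $n\ge0$, $k\in\mathbb Z$. *)

theory Defs
  imports Complex_Main
begin

text \<open>Hsu--Shiue Stirling numbers S_{n,k}(a,b;r) for n,k >= 0.
  Entries with k < 0 are 0, so the recurrence at k = -1 reads
  S_{n+1,0} = (-a n + r) S_{n,0}; entries with k > n vanish automatically.\<close>
fun HS :: "complex \<Rightarrow> complex \<Rightarrow> complex \<Rightarrow> nat \<Rightarrow> nat \<Rightarrow> complex" where
  "HS a b r 0 k = (if k = 0 then 1 else 0)"
| "HS a b r (Suc n) 0 = (- a * of_nat n + r) * HS a b r n 0"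
| "HS a b r (Suc n) (Suc k) =
     (- a * of_nat n + b * of_nat (Suc k) + r) * HS a b r n (Suc k) + HS a b r n k"

end

theory Submission
  imports Defs
begin

text \<open>Every identity is proved by showing that both sides satisfy the same triangular
  recurrence in the row index with the same initial row. For the product
  \<open>\<S>(a,b;r\<^sub>1) \<S>(b,c;r\<^sub>2)\<close> the multiplier \<open>-a n + c k + r\<^sub>1 + r\<^sub>2\<close> arises as
  \<open>(-a n + b j + r\<^sub>1) + (-b j + c k + r\<^sub>2)\<close>, the \<open>b j\<close> terms cancelling after an index
  shift in \<open>j\<close>. For (ii) the binomial convolution in the row index obeys a Leibniz rule,
  and for (iii) the binomial weight in the column index obeys Pascal's rule; in both cases
  the two multipliers again add up to that of \<open>\<S>(a,b;r\<^sub>1+r\<^sub>2)\<close>.\<close>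

lemma HS_eq_0_if_less: "n < k \<Longrightarrow> HS a b r n k = 0"
proof (induction n arbitrary: k)
  case (Suc n)
  then show ?case by (cases k) auto
qed simp

lemma HS_Suc:
  "HS a b r (Suc n) k = (- a * of_nat n + b * of_nat k + r) * HS a b r n k
     + (if k = 0 then 0 else HS a b r n (k - 1))"
  by (cases k) auto

lemma HS_eqI:
  assumes "\<And>k. F 0 k = (if k = 0 then 1 else 0)"
    and "\<And>n k. F (Suc n) k = (- a * of_nat n + b * of_nat k + r) * F n k
                              + (if k = 0 then 0 else F n (k - 1))"
  shows "F n k = HS a b r n k"
proof (induction n arbitrary: k)
  case (Suc n)
  then show ?case using assms(2) HS_Suc by simp
qed (simp add: assms(1))

lemma sum_atMost_Suc_shift_pred:
  fixes f g :: "nat \<Rightarrow> 'a :: comm_semiring_0"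
  shows "(\<Sum>j\<le>Suc n. (if j = 0 then 0 else f (j - 1)) * g j) = (\<Sum>j\<le>n. f j * g (Suc j))"
  by (subst sum.atMost_Suc_shift) simp

lemma HS_mult: "(\<Sum>j\<le>n. HS a b r1 n j * HS b c r2 j k) = HS a c (r1 + r2) n k"
proof (rule HS_eqI)
  fix n k
  let ?P = "\<lambda>n k. \<Sum>j\<le>n. HS a b r1 n j * HS b c r2 j k"
  have "?P (Suc n) k
      = (\<Sum>j\<le>Suc n. (- a * of_nat n + b * of_nat j + r1) * HS a b r1 n j * HS b c r2 j k)
        + (\<Sum>j\<le>Suc n. (if j = 0 then 0 else HS a b r1 n (j - 1)) * HS b c r2 j k)"
    unfolding HS_Suc[of a b r1 n] by (simp add: distrib_right sum.distrib)
  also have "\<dots> = (\<Sum>j\<le>n. (- a * of_nat n + b * of_nat j + r1) * HS a b r1 n j * HS b c r2 j k)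
        + (\<Sum>j\<le>n. HS a b r1 n j * HS b c r2 (Suc j) k)"
    by (subst sum_atMost_Suc_shift_pred) (simp add: HS_eq_0_if_less)
  also have "\<dots> = (\<Sum>j\<le>n. (- a * of_nat n + c * of_nat k + (r1 + r2)) * (HS a b r1 n j * HS b c r2 j k)
                  + (if k = 0 then 0 else HS a b r1 n j * HS b c r2 j (k - 1)))"
    unfolding sum.distrib[symmetric]
    by (rule sum.cong) (auto simp: HS_Suc[of b c r2] algebra_simps)
  also have "\<dots> = (- a * of_nat n + c * of_nat k + (r1 + r2)) * ?P n k
                  + (if k = 0 then 0 else ?P n (k - 1))"
    by (simp add: sum.distrib sum_distrib_left)
  finally show "?P (Suc n) k = \<dots>" .
qed simp

lemma HS_same_0: "HS a a 0 n k = (if n = k then 1 else 0)"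
proof (induction n arbitrary: k)
  case (Suc n)
  then show ?case by (cases k) (auto simp: HS_Suc)
qed simp

lemma HS_mult_inverse: "(\<Sum>j\<le>n. HS a b r n j * HS b a (- r) j k) = (if n = k then 1 else 0)"
  by (simp add: HS_mult HS_same_0)

definition binomial_conv :: "(nat \<Rightarrow> 'a :: comm_semiring_1) \<Rightarrow> (nat \<Rightarrow> 'a) \<Rightarrow> nat \<Rightarrow> 'a" where
  "binomial_conv f g n = (\<Sum>i\<le>n. of_nat (n choose i) * f i * g (n - i))"

lemma binomial_conv_Suc:
  "binomial_conv f g (Suc n) = binomial_conv (\<lambda>i. f (Suc i)) g n + binomial_conv f (\<lambda>i. g (Suc i)) n"
proof -
  have "binomial_conv f g (Suc n) = f 0 * g (Suc n)
          + (\<Sum>i\<le>n. of_nat (n choose i) * f (Suc i) * g (n - i))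
          + (\<Sum>i\<le>n. of_nat (n choose Suc i) * f (Suc i) * g (n - i))"
    unfolding binomial_conv_def
    by (subst sum.atMost_Suc_shift) (simp add: distrib_right sum.distrib add.assoc)
  moreover have "binomial_conv f (\<lambda>i. g (Suc i)) n
      = (\<Sum>i\<le>Suc n. of_nat (n choose i) * f i * g (Suc n - i))"
    unfolding binomial_conv_def by (simp add: Suc_diff_le binomial_eq_0)
  moreover have "\<dots> = f 0 * g (Suc n) + (\<Sum>i\<le>n. of_nat (n choose Suc i) * f (Suc i) * g (n - i))"
    by (subst sum.atMost_Suc_shift) simp
  ultimately show ?thesis
    unfolding binomial_conv_def by (simp add: add_ac)
qed

lemma binomial_conv_HS_Suc:
  "binomial_conv (\<lambda>i. HS a b r1 i k1) (\<lambda>i. HS a b r2 i k2) (Suc n)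
     = (- a * of_nat n + b * of_nat (k1 + k2) + (r1 + r2))
         * binomial_conv (\<lambda>i. HS a b r1 i k1) (\<lambda>i. HS a b r2 i k2) n
       + (if k1 = 0 then 0 else binomial_conv (\<lambda>i. HS a b r1 i (k1 - 1)) (\<lambda>i. HS a b r2 i k2) n)
       + (if k2 = 0 then 0 else binomial_conv (\<lambda>i. HS a b r1 i k1) (\<lambda>i. HS a b r2 i (k2 - 1)) n)"
proof -
  have "binomial_conv (\<lambda>i. HS a b r1 i k1) (\<lambda>i. HS a b r2 i k2) (Suc n)
      = (\<Sum>i\<le>n. of_nat (n choose i) * HS a b r1 (Suc i) k1 * HS a b r2 (n - i) k2
                + of_nat (n choose i) * HS a b r1 i k1 * HS a b r2 (Suc (n - i)) k2)"
    unfolding binomial_conv_Suc unfolding binomial_conv_def by (simp only: sum.distrib)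
  also have "\<dots> = (\<Sum>i\<le>n. (- a * of_nat n + b * of_nat (k1 + k2) + (r1 + r2))
                    * (of_nat (n choose i) * HS a b r1 i k1 * HS a b r2 (n - i) k2)
      + (if k1 = 0 then 0 else of_nat (n choose i) * HS a b r1 i (k1 - 1) * HS a b r2 (n - i) k2)
      + (if k2 = 0 then 0 else of_nat (n choose i) * HS a b r1 i k1 * HS a b r2 (n - i) (k2 - 1)))"
    by (rule sum.cong) (auto simp: HS_Suc of_nat_diff algebra_simps)
  finally show ?thesis
    unfolding binomial_conv_def
    by (cases k1; cases k2) (simp_all add: sum.distrib sum_distrib_left)
qed

lemma binomial_conv_HS:
  "binomial_conv (\<lambda>i. HS a b r1 i k1) (\<lambda>i. HS a b r2 i k2) n
     = of_nat ((k1 + k2) choose k1) * HS a b (r1 + r2) n (k1 + k2)"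
proof (induction n arbitrary: k1 k2)
  case 0
  then show ?case by (simp add: binomial_conv_def)
next
  case (Suc n)
  show ?case
    unfolding binomial_conv_HS_Suc Suc HS_Suc[of a b "r1 + r2" n]
    by (cases k1; cases k2) (simp_all add: algebra_simps)
qed

lemma sum_antidiagonal_filter:
  fixes f :: "nat \<Rightarrow> nat \<Rightarrow> 'a :: comm_monoid_add"
  shows "(\<Sum>(i, j) \<in> {(i, j). i + j = n \<and> P i j}. f i j)
           = (\<Sum>i\<le>n. if P i (n - i) then f i (n - i) else 0)"
proof -
  have "{(i, j). i + j = n \<and> P i j} = (\<lambda>i. (i, n - i)) ` {i \<in> {..n}. P i (n - i)}"
    by (auto simp: image_iff)
  moreover have "inj_on (\<lambda>i. (i, n - i)) {i \<in> {..n}. P i (n - i)}"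
    by (auto simp: inj_on_def)
  ultimately have "(\<Sum>(i, j) \<in> {(i, j). i + j = n \<and> P i j}. f i j)
      = (\<Sum>i \<in> {i \<in> {..n}. P i (n - i)}. f i (n - i))"
    by (simp add: sum.reindex)
  then show ?thesis
    by (simp only: sum.inter_filter[OF finite_atMost])
qed

theorem HS_vandermonde:
  assumes "k = k1 + k2"
  shows "fact k / (fact k1 * fact k2) * HS a b (r1 + r2) n k =
          (\<Sum>(n1, n2) \<in> {(n1, n2). n1 + n2 = n \<and> k1 \<le> n1 \<and> k2 \<le> n2}.
             fact n / (fact n1 * fact n2) * HS a b r1 n1 k1 * HS a b r2 n2 k2)"
proof -
  have "(\<Sum>(n1, n2) \<in> {(n1, n2). n1 + n2 = n \<and> k1 \<le> n1 \<and> k2 \<le> n2}.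
           fact n / (fact n1 * fact n2) * HS a b r1 n1 k1 * HS a b r2 n2 k2)
      = binomial_conv (\<lambda>i. HS a b r1 i k1) (\<lambda>i. HS a b r2 i k2) n"
    unfolding sum_antidiagonal_filter binomial_conv_def
    by (rule sum.cong) (auto simp: binomial_fact HS_eq_0_if_less)
  moreover have "(of_nat (k choose k1) :: complex) = fact k / (fact k1 * fact k2)"
    using binomial_fact[of k1 k] assms by simp
  ultimately show ?thesis
    using binomial_conv_HS assms by simp
qed

definition HS_mixed_sum :: "complex \<Rightarrow> complex \<Rightarrow> complex \<Rightarrow> complex \<Rightarrow> nat \<Rightarrow> nat \<Rightarrow> nat \<Rightarrow> complex" where
  "HS_mixed_sum a b r1 r2 n1 k k2 =
     (\<Sum>n2\<le>n1. of_nat ((k + n2) choose k) * HS a b r1 n1 (k + n2) * HS b a r2 n2 k2)"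

lemma binomial_pascal_shift:
  fixes f :: "nat \<Rightarrow> 'a :: comm_semiring_1"
  shows "of_nat ((k + m) choose k) * (if k + m = 0 then 0 else f (k + m - 1))
     = (if k = 0 then 0 else of_nat ((k - 1 + m) choose (k - 1)) * f (k - 1 + m))
       + (if m = 0 then 0 else of_nat ((k + (m - 1)) choose k) * f (k + (m - 1)))"
  by (cases k; cases m) (simp_all add: algebra_simps)

lemma HS_mixed_sum_Suc:
  "HS_mixed_sum a b r1 r2 (Suc n1) k k2
     = (- a * of_nat n1 + a * of_nat k2 + b * of_nat k + (r1 + r2)) * HS_mixed_sum a b r1 r2 n1 k k2
       + (if k = 0 then 0 else HS_mixed_sum a b r1 r2 n1 (k - 1) k2)
       + (if k2 = 0 then 0 else HS_mixed_sum a b r1 r2 n1 k (k2 - 1))"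
  (is "?D (Suc n1) k k2 = ?c * ?D n1 k k2 + ?Dk + ?Dk2")
proof -
  let ?A = "HS a b r1 n1" and ?B = "HS b a r2"
  let ?w = "\<lambda>m. of_nat ((k + m) choose k) :: complex"
  let ?X = "\<lambda>N. \<Sum>m\<le>N. ?w m * ((- a * of_nat n1 + b * of_nat (k + m) + r1) * ?A (k + m)) * ?B m k2"
  have "?D (Suc n1) k k2
      = ?X (Suc n1) + (\<Sum>m\<le>Suc n1. (?w m * (if k + m = 0 then 0 else ?A (k + m - 1))) * ?B m k2)"
    unfolding HS_mixed_sum_def HS_Suc[of a b r1 n1] sum.distrib[symmetric]
    by (rule sum.cong) (simp_all only: distrib_left distrib_right)
  also have "\<dots> = ?X (Suc n1)
      + (\<Sum>m\<le>Suc n1. (if k = 0 then 0 else of_nat ((k - 1 + m) choose (k - 1)) * ?A (k - 1 + m))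
                       * ?B m k2)
      + (\<Sum>m\<le>Suc n1. (if m = 0 then 0 else ?w (m - 1) * ?A (k + (m - 1))) * ?B m k2)"
    by (simp only: binomial_pascal_shift distrib_right sum.distrib add.assoc)
  also have "\<dots> = ?X n1 + (\<Sum>m\<le>n1. ?w m * ?A (k + m) * ?B (Suc m) k2) + ?Dk"
  proof -
    have "?X (Suc n1) = ?X n1"
      by (simp add: HS_eq_0_if_less)
    moreover have "(\<Sum>m\<le>Suc n1. (if k = 0 then 0 else of_nat ((k - 1 + m) choose (k - 1))
                                      * ?A (k - 1 + m)) * ?B m k2) = ?Dk"
      by (cases k) (simp_all add: HS_mixed_sum_def HS_eq_0_if_less)
    moreover have "(\<Sum>m\<le>Suc n1. (if m = 0 then 0 else ?w (m - 1) * ?A (k + (m - 1))) * ?B m k2)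
        = (\<Sum>m\<le>n1. ?w m * ?A (k + m) * ?B (Suc m) k2)"
      by (rule sum_atMost_Suc_shift_pred[where f = "\<lambda>m. ?w m * ?A (k + m)"])
    ultimately show ?thesis by (simp only: add_ac)
  qed
  also have "\<dots> = (\<Sum>m\<le>n1. ?c * (?w m * ?A (k + m) * ?B m k2)
                   + (if k2 = 0 then 0 else ?w m * ?A (k + m) * ?B m (k2 - 1))) + ?Dk"
    unfolding sum.distrib[symmetric]
    by (rule arg_cong2[where f = "(+)"], rule sum.cong) (auto simp: HS_Suc[of b a r2] algebra_simps)
  also have "\<dots> = ?c * ?D n1 k k2 + ?Dk + ?Dk2"
    by (cases k2) (simp_all add: HS_mixed_sum_def sum.distrib sum_distrib_left add_ac)
  finally show ?thesis .
qed

lemma HS_mixed_sum_eq: "HS_mixed_sum a b r1 r2 n1 k k2 = of_nat (n1 choose k2) * HS a b (r1 + r2) (n1 - k2) k"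
proof (induction n1 arbitrary: k k2)
  case 0
  then show ?case by (cases k2) (simp_all add: HS_mixed_sum_def)
next
  case (Suc n1)
  show ?case
  proof (cases k2)
    case 0
    then show ?thesis unfolding HS_mixed_sum_Suc Suc by (simp add: HS_Suc)
  next
    case (Suc j)
    show ?thesis
    proof (cases "n1 < Suc j")
      case True
      then show ?thesis unfolding HS_mixed_sum_Suc Suc.IH using Suc by simp
    next
      case False
      then obtain d where "n1 = Suc j + d" by (metis le_iff_add not_less)
      then show ?thesis unfolding HS_mixed_sum_Suc Suc.IH using Suc by (simp add: HS_Suc algebra_simps)
    qed
  qed
qed

lemma sum_diagonal_filter:
  fixes f :: "nat \<Rightarrow> nat \<Rightarrow> 'a :: comm_monoid_add"
  shows "(\<Sum>(i, j) \<in> {(i, j). i = k + j \<and> i \<le> n \<and> P j}. f i j)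
           = (\<Sum>j\<le>n. if k + j \<le> n \<and> P j then f (k + j) j else 0)"
proof -
  have "{(i, j). i = k + j \<and> i \<le> n \<and> P j} = (\<lambda>j. (k + j, j)) ` {j \<in> {..n}. k + j \<le> n \<and> P j}"
    by (auto simp: image_iff)
  moreover have "inj_on (\<lambda>j. (k + j, j)) {j \<in> {..n}. k + j \<le> n \<and> P j}"
    by (auto simp: inj_on_def)
  ultimately have "(\<Sum>(i, j) \<in> {(i, j). i = k + j \<and> i \<le> n \<and> P j}. f i j)
      = (\<Sum>j \<in> {j \<in> {..n}. k + j \<le> n \<and> P j}. f (k + j) j)"
    by (simp add: sum.reindex)
  then show ?thesis
    by (simp only: sum.inter_filter[OF finite_atMost])
qed

theorem HS_vandermonde_dual:
  assumes "n1 = n + k2"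
  shows "fact n1 / (fact n * fact k2) * HS a b (r1 + r2) n k =
          (\<Sum>(k1, n2) \<in> {(k1, n2). k1 = k + n2 \<and> k1 \<le> n1 \<and> k2 \<le> n2}.
             fact k1 / (fact k * fact n2) * HS a b r1 n1 k1 * HS b a r2 n2 k2)"
proof -
  have "(\<Sum>(k1, n2) \<in> {(k1, n2). k1 = k + n2 \<and> k1 \<le> n1 \<and> k2 \<le> n2}.
           fact k1 / (fact k * fact n2) * HS a b r1 n1 k1 * HS b a r2 n2 k2)
      = HS_mixed_sum a b r1 r2 n1 k k2"
    unfolding sum_diagonal_filter HS_mixed_sum_def
    by (rule sum.cong) (auto simp: binomial_fact HS_eq_0_if_less)
  moreover have "(of_nat (n1 choose k2) :: complex) = fact n1 / (fact n * fact k2)"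
    using binomial_fact[of k2 n1] assms by (simp add: mult.commute)
  ultimately show ?thesis
    using HS_mixed_sum_eq[of a b r1 r2 n1 k k2] assms by simp
qed

theorem mainTheorem13:
  fixes a b c r r1 r2 :: complex
  shows
    "(\<forall>n k. HS a c (r1 + r2) n k = (\<Sum>j\<le>n. HS a b r1 n j * HS b c r2 j k))
     \<and> (\<forall>n k. HS a a 0 n k = (if n = k then 1 else 0))
     \<and> (\<forall>n k. (\<Sum>j\<le>n. HS a b r n j * HS b a (- r) j k) = (if n = k then 1 else 0))
     \<and> (\<forall>n k. (\<Sum>j\<le>n. HS b a (- r) n j * HS a b r j k) = (if n = k then 1 else 0))
     \<and> (\<forall>n k k1 k2. k = k1 + k2 \<longrightarrow>
          fact k / (fact k1 * fact k2) * HS a b (r1 + r2) n k =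
          (\<Sum>(n1, n2) \<in> {(n1, n2). n1 + n2 = n \<and> k1 \<le> n1 \<and> k2 \<le> n2}.
             fact n / (fact n1 * fact n2) * HS a b r1 n1 k1 * HS a b r2 n2 k2))
     \<and> (\<forall>k n1 n k2. n1 = n + k2 \<longrightarrow>
          fact n1 / (fact n * fact k2) * HS a b (r1 + r2) n k =
          (\<Sum>(k1, n2) \<in> {(k1, n2). k1 = k + n2 \<and> k1 \<le> n1 \<and> k2 \<le> n2}.
             fact k1 / (fact k * fact n2) * HS a b r1 n1 k1 * HS b a r2 n2 k2))"
  using HS_mult HS_same_0 HS_mult_inverse HS_mult_inverse[of b a "- r"]
    HS_vandermonde HS_vandermonde_dual
  by simp

end
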